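(* Let $(\mathscr{C},\mathbb{E},\mathfrak{s})$ be an extriangulated category such that for every object $A$ the morphism $A\to 0$ is an $\mathbb{E}$-inflation and $0\to A$ is an $\mathbb{E}$-deflation, and let $\Sigma$ and $\delta_Y$ be as in the context. Then for all objects $X,Y$ of $\mathscr{C}$, the map $\mathscr{C}(X,\Sigma Y)\to\mathbb{E}(X,Y)$, $\varepsilon\mapsto\varepsilon^*\delta_Y$, is a group isomorphism; in particular $\mathbf{E}^1(X,Y):=\mathscr{C}(X,\Sigma Y)\cong\mathbb{E}(X,Y)$.
   Context: An extriangulated category $(\mathscr{C},\mathbb{E},\mathfrak{s})$ is in the sense of Nakaoka–Palu: $\mathscr{C}$ additive, $\mathbb{E}\colon\mathscr{C}^{\mathrm{op}}\times\mathscr{C}\to Ab$ biadditive, $\mathfrak{s}$ an additive realisation assigning to $\delta\in\mathbb{E}(C,A)$ an equivalence class of sequences $[A\to B\to C]$, satisfying (ET1)–(ET4)$^{\mathrm{op}}$. For $a\colon A\to A'$ and $c\colon C'\to C$ write $a_*\delta=\mathbb{E}(C,a)(\delta)$ and $c^*\delta=\mathbb{E}(c,A)(\delta)$. A morphism $x\colon A\to B$ is an $\mathbb{E}$-inflation if $\mathfrak{s}(\delta)=[A\xrightarrow{x}B\to C]$ for some $\delta\in\mathbb{E}(C,A)$; dually for $\mathbb{E}$-deflations. For each object $Y$, $\Sigma Y$ is a chosen object with $\delta_Y\in\mathbb{E}(\Sigma Y,Y)$ such that $\mathfrak{s}(\delta_Y)=[Y\to 0\to\Sigma Y]$; for $f\colon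 X\to Y$, $\Sigma f$ is the unique morphism $\Sigma X\to\Sigma Y$ with $f_*\delta_X=(\Sigma f)^*\delta_Y$. *)

theory Defs
  imports "HOL-Algebra.Group"
begin

text \<open>
  A category is given by a set of objects Ob, hom-groups Hg A B (abelian groups
  whose carrier is the hom-set C(A,B), group operation = addition of morphisms,
  unit = zero morphism), composition cmp g f (= g o f) and identities idm A.
  The biadditive functor E is given by the abelian groups Eg C A = E(C,A),
  the covariant action epush C A A' a delta = a_* delta (a : A -> A', delta in E(C,A))
  and the contravariant action epull C' C A c delta = c^* delta (c : C' -> C,
  delta in E(C,A)).  The realisation s assigns to delta in E(C,A) the set
  rlz C A delta of triples (B,x,y) representing sequences A -x-> B -y-> C; it is
  required to be exactly one equivalence class of such sequences.
\<close>

record ('o,'m,'e) extri =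
  Ob :: "'o set"
  Hg :: "'o \<Rightarrow> 'o \<Rightarrow> 'm monoid"
  cmp :: "'m \<Rightarrow> 'm \<Rightarrow> 'm"
  idm :: "'o \<Rightarrow> 'm"
  Eg :: "'o \<Rightarrow> 'o \<Rightarrow> 'e monoid"
  epush :: "'o \<Rightarrow> 'o \<Rightarrow> 'o \<Rightarrow> 'm \<Rightarrow> 'e \<Rightarrow> 'e"
  epull :: "'o \<Rightarrow> 'o \<Rightarrow> 'o \<Rightarrow> 'm \<Rightarrow> 'e \<Rightarrow> 'e"
  rlz :: "'o \<Rightarrow> 'o \<Rightarrow> 'e \<Rightarrow> ('o \<times> 'm \<times> 'm) set"

definition Hm :: "('o,'m,'e) extri \<Rightarrow> 'o \<Rightarrow> 'o \<Rightarrow> 'm set" where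
  "Hm X A B = carrier (Hg X A B)"

definition hadd :: "('o,'m,'e) extri \<Rightarrow> 'o \<Rightarrow> 'o \<Rightarrow> 'm \<Rightarrow> 'm \<Rightarrow> 'm" where
  "hadd X A B f g = f \<otimes>\<^bsub>Hg X A B\<^esub> g"

definition zmor :: "('o,'m,'e) extri \<Rightarrow> 'o \<Rightarrow> 'o \<Rightarrow> 'm" where
  "zmor X A B = \<one>\<^bsub>Hg X A B\<^esub>"

definition Ecar :: "('o,'m,'e) extri \<Rightarrow> 'o \<Rightarrow> 'o \<Rightarrow> 'e set" where
  "Ecar X C A = carrier (Eg X C A)"

definition is_iso :: "('o,'m,'e) extri \<Rightarrow> 'o \<Rightarrow> 'o \<Rightarrow> 'm \<Rightarrow> bool" where
  "is_iso X A B f \<longleftrightarrow> f \<in> Hm X A B \<and>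
     (\<exists>g\<in>Hm X B A. cmp X g f = idm X A \<and> cmp X f g = idm X B)"

definition is_zero_obj :: "('o,'m,'e) extri \<Rightarrow> 'o \<Rightarrow> bool" where
  "is_zero_obj X Z \<longleftrightarrow> Z \<in> Ob X \<and>
     (\<forall>A\<in>Ob X. (\<exists>!f. f \<in> Hm X A Z) \<and> (\<exists>!f. f \<in> Hm X Z A))"

definition is_biprod :: "('o,'m,'e) extri \<Rightarrow> 'o \<Rightarrow> 'o \<Rightarrow> 'o \<Rightarrow> 'm \<Rightarrow> 'm \<Rightarrow> 'm \<Rightarrow> 'm \<Rightarrow> bool" where
  "is_biprod X A1 A2 P i1 i2 p1 p2 \<longleftrightarrow> P \<in> Ob X \<and>
     i1 \<in> Hm X A1 P \<and> i2 \<in> Hm X A2 P \<and> p1 \<in> Hm X P A1 \<and> p2 \<in> Hm X P A2 \<and>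
     cmp X p1 i1 = idm X A1 \<and> cmp X p2 i2 = idm X A2 \<and>
     cmp X p1 i2 = zmor X A2 A1 \<and> cmp X p2 i1 = zmor X A1 A2 \<and>
     hadd X P P (cmp X i1 p1) (cmp X i2 p2) = idm X P"

definition additive_cat :: "('o,'m,'e) extri \<Rightarrow> bool" where
  "additive_cat X \<longleftrightarrow>
     (\<forall>A\<in>Ob X. \<forall>B\<in>Ob X. comm_group (Hg X A B)) \<and>
     (\<forall>A\<in>Ob X. idm X A \<in> Hm X A A) \<and>
     (\<forall>A\<in>Ob X. \<forall>B\<in>Ob X. \<forall>C\<in>Ob X. \<forall>f\<in>Hm X A B. \<forall>g\<in>Hm X B C. cmp X g f \<in> Hm X A C) \<and>
     (\<forall>A\<in>Ob X. \<forall>B\<in>Ob X. \<forall>C\<in>Ob X. \<forall>D\<in>Ob X. \<forall>f\<in>Hm X A B. \<forall>g\<in>Hm X B C. \<forall>h\<in>Hm X C D.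
        cmp X h (cmp X g f) = cmp X (cmp X h g) f) \<and>
     (\<forall>A\<in>Ob X. \<forall>B\<in>Ob X. \<forall>f\<in>Hm X A B. cmp X f (idm X A) = f \<and> cmp X (idm X B) f = f) \<and>
     (\<forall>A\<in>Ob X. \<forall>B\<in>Ob X. \<forall>C\<in>Ob X. \<forall>f\<in>Hm X A B. \<forall>f'\<in>Hm X A B. \<forall>g\<in>Hm X B C.
        cmp X g (hadd X A B f f') = hadd X A C (cmp X g f) (cmp X g f')) \<and>
     (\<forall>A\<in>Ob X. \<forall>B\<in>Ob X. \<forall>C\<in>Ob X. \<forall>f\<in>Hm X A B. \<forall>g\<in>Hm X B C. \<forall>g'\<in>Hm X B C.
        cmp X (hadd X B C g g') f = hadd X A C (cmp X g f) (cmp X g' f)) \<and>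
     (\<exists>Z. is_zero_obj X Z) \<and>
     (\<forall>A1\<in>Ob X. \<forall>A2\<in>Ob X. \<exists>P i1 i2 p1 p2. is_biprod X A1 A2 P i1 i2 p1 p2)"

definition biadditive_E :: "('o,'m,'e) extri \<Rightarrow> bool" where
  "biadditive_E X \<longleftrightarrow>
     (\<forall>C\<in>Ob X. \<forall>A\<in>Ob X. comm_group (Eg X C A)) \<and>
     \<comment> \<open>covariant part a_*\<close>
     (\<forall>C\<in>Ob X. \<forall>A\<in>Ob X. \<forall>A'\<in>Ob X. \<forall>a\<in>Hm X A A'.
        epush X C A A' a \<in> hom (Eg X C A) (Eg X C A')) \<and>
     (\<forall>C\<in>Ob X. \<forall>A\<in>Ob X. \<forall>d\<in>Ecar X C A. epush X C A A (idm X A) d = d) \<and>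
     (\<forall>C\<in>Ob X. \<forall>A\<in>Ob X. \<forall>A'\<in>Ob X. \<forall>A''\<in>Ob X. \<forall>a\<in>Hm X A A'. \<forall>b\<in>Hm X A' A''.
        \<forall>d\<in>Ecar X C A. epush X C A A'' (cmp X b a) d = epush X C A' A'' b (epush X C A A' a d)) \<and>
     (\<forall>C\<in>Ob X. \<forall>A\<in>Ob X. \<forall>A'\<in>Ob X. \<forall>a\<in>Hm X A A'. \<forall>a'\<in>Hm X A A'. \<forall>d\<in>Ecar X C A.
        epush X C A A' (hadd X A A' a a') d
          = epush X C A A' a d \<otimes>\<^bsub>Eg X C A'\<^esub> epush X C A A' a' d) \<and>
     \<comment> \<open>contravariant part c^*\<close>
     (\<forall>C'\<in>Ob X. \<forall>C\<in>Ob X. \<forall>A\<in>Ob X. \<forall>c\<in>Hm X C' C.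
        epull X C' C A c \<in> hom (Eg X C A) (Eg X C' A)) \<and>
     (\<forall>C\<in>Ob X. \<forall>A\<in>Ob X. \<forall>d\<in>Ecar X C A. epull X C C A (idm X C) d = d) \<and>
     (\<forall>C''\<in>Ob X. \<forall>C'\<in>Ob X. \<forall>C\<in>Ob X. \<forall>A\<in>Ob X. \<forall>c'\<in>Hm X C'' C'. \<forall>c\<in>Hm X C' C.
        \<forall>d\<in>Ecar X C A. epull X C'' C A (cmp X c c') d = epull X C'' C' A c' (epull X C' C A c d)) \<and>
     (\<forall>C'\<in>Ob X. \<forall>C\<in>Ob X. \<forall>A\<in>Ob X. \<forall>c\<in>Hm X C' C. \<forall>c'\<in>Hm X C' C. \<forall>d\<in>Ecar X C A.
        epull X C' C A (hadd X C' C c c') d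
          = epull X C' C A c d \<otimes>\<^bsub>Eg X C' A\<^esub> epull X C' C A c' d) \<and>
     \<comment> \<open>bifunctoriality\<close>
     (\<forall>C'\<in>Ob X. \<forall>C\<in>Ob X. \<forall>A\<in>Ob X. \<forall>A'\<in>Ob X. \<forall>c\<in>Hm X C' C. \<forall>a\<in>Hm X A A'. \<forall>d\<in>Ecar X C A.
        epush X C' A A' a (epull X C' C A c d) = epull X C' C A' c (epush X C A A' a d))"

definition seq_equiv :: "('o,'m,'e) extri \<Rightarrow> 'o \<times> 'm \<times> 'm \<Rightarrow> 'o \<times> 'm \<times> 'm \<Rightarrow> bool" where
  "seq_equiv X s t = (case s of (B,x,y) \<Rightarrow> case t of (B',x',y') \<Rightarrow>
     (\<exists>b. is_iso X B B' b \<and> cmp X b x = x' \<and> cmp X y' b = y))"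

definition realisation_wf :: "('o,'m,'e) extri \<Rightarrow> bool" where
  "realisation_wf X \<longleftrightarrow>
     (\<forall>C\<in>Ob X. \<forall>A\<in>Ob X. \<forall>d\<in>Ecar X C A.
        rlz X C A d \<noteq> {} \<and>
        (\<forall>(B,x,y)\<in>rlz X C A d. B \<in> Ob X \<and> x \<in> Hm X A B \<and> y \<in> Hm X B C) \<and>
        (\<forall>s\<in>rlz X C A d. \<forall>B'\<in>Ob X. \<forall>x'\<in>Hm X A B'. \<forall>y'\<in>Hm X B' C.
            ((B',x',y') \<in> rlz X C A d \<longleftrightarrow> seq_equiv X s (B',x',y'))))"

definition is_realisation :: "('o,'m,'e) extri \<Rightarrow> bool" where
  "is_realisation X \<longleftrightarrow>
     (\<forall>A\<in>Ob X. \<forall>C\<in>Ob X. \<forall>A'\<in>Ob X. \<forall>C'\<in>Ob X. \<forall>d\<in>Ecar X C A. \<forall>d'\<in>Ecar X C' A'.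
      \<forall>a\<in>Hm X A A'. \<forall>c\<in>Hm X C C'. \<forall>B x y B' x' y'.
        epush X C A A' a d = epull X C C' A' c d' \<longrightarrow>
        (B,x,y) \<in> rlz X C A d \<longrightarrow> (B',x',y') \<in> rlz X C' A' d' \<longrightarrow>
        (\<exists>b\<in>Hm X B B'. cmp X b x = cmp X x' a \<and> cmp X y' b = cmp X c y))"

text \<open>(ET2), second half: s is additive.  The element delta (+) delta' of
  E(C(+)C', A(+)A') is (i_A)_*(p_C)^*delta + (i_A')_*(p_C')^*delta'.\<close>
definition additive_realisation :: "('o,'m,'e) extri \<Rightarrow> bool" where
  "additive_realisation X \<longleftrightarrow>
     (\<forall>A\<in>Ob X. \<forall>C\<in>Ob X. \<forall>P iA iC pA pC. is_biprod X A C P iA iC pA pC \<longrightarrow>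
        (P, iA, pC) \<in> rlz X C A (\<one>\<^bsub>Eg X C A\<^esub>)) \<and>
     (\<forall>A\<in>Ob X. \<forall>C\<in>Ob X. \<forall>A'\<in>Ob X. \<forall>C'\<in>Ob X. \<forall>d\<in>Ecar X C A. \<forall>d'\<in>Ecar X C' A'.
      \<forall>B x y B' x' y' PA iA iA' pA pA' PB iB iB' pB pB' PC iC iC' pC pC'.
        (B,x,y) \<in> rlz X C A d \<longrightarrow> (B',x',y') \<in> rlz X C' A' d' \<longrightarrow>
        is_biprod X A A' PA iA iA' pA pA' \<longrightarrow>
        is_biprod X B B' PB iB iB' pB pB' \<longrightarrow>
        is_biprod X C C' PC iC iC' pC pC' \<longrightarrow>
        (PB, hadd X PA PB (cmp X iB (cmp X x pA)) (cmp X iB' (cmp X x' pA')),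
             hadd X PB PC (cmp X iC (cmp X y pB)) (cmp X iC' (cmp X y' pB')))
          \<in> rlz X PC PA (epush X PC A PA iA (epull X PC C A pC d)
                          \<otimes>\<^bsub>Eg X PC PA\<^esub> epush X PC A' PA iA' (epull X PC C' A' pC' d')))"

definition ET3 :: "('o,'m,'e) extri \<Rightarrow> bool" where
  "ET3 X \<longleftrightarrow>
     (\<forall>A\<in>Ob X. \<forall>C\<in>Ob X. \<forall>A'\<in>Ob X. \<forall>C'\<in>Ob X. \<forall>d\<in>Ecar X C A. \<forall>d'\<in>Ecar X C' A'.
      \<forall>B x y B' x' y' a b.
        (B,x,y) \<in> rlz X C A d \<longrightarrow> (B',x',y') \<in> rlz X C' A' d' \<longrightarrow>
        a \<in> Hm X A A' \<longrightarrow> b \<in> Hm X B B' \<longrightarrow> cmp X b x = cmp X x' a \<longrightarrow>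
        (\<exists>c\<in>Hm X C C'. cmp X c y = cmp X y' b \<and> epush X C A A' a d = epull X C C' A' c d'))"

definition ET3op :: "('o,'m,'e) extri \<Rightarrow> bool" where
  "ET3op X \<longleftrightarrow>
     (\<forall>A\<in>Ob X. \<forall>C\<in>Ob X. \<forall>A'\<in>Ob X. \<forall>C'\<in>Ob X. \<forall>d\<in>Ecar X C A. \<forall>d'\<in>Ecar X C' A'.
      \<forall>B x y B' x' y' b c.
        (B,x,y) \<in> rlz X C A d \<longrightarrow> (B',x',y') \<in> rlz X C' A' d' \<longrightarrow>
        b \<in> Hm X B B' \<longrightarrow> c \<in> Hm X C C' \<longrightarrow> cmp X c y = cmp X y' b \<longrightarrow>
        (\<exists>a\<in>Hm X A A'. cmp X b x = cmp X x' a \<and> epush X C A A' a d = epull X C C' A' c d'))"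

definition ET4 :: "('o,'m,'e) extri \<Rightarrow> bool" where
  "ET4 X \<longleftrightarrow>
     (\<forall>A\<in>Ob X. \<forall>B\<in>Ob X. \<forall>C\<in>Ob X. \<forall>D\<in>Ob X. \<forall>F\<in>Ob X.
      \<forall>d\<in>Ecar X D A. \<forall>d'\<in>Ecar X F B. \<forall>f f' g g'.
        (B,f,f') \<in> rlz X D A d \<longrightarrow> (C,g,g') \<in> rlz X F B d' \<longrightarrow>
        (\<exists>E\<in>Ob X. \<exists>h'\<in>Hm X C E. \<exists>dm\<in>Hm X D E. \<exists>e\<in>Hm X E F. \<exists>d''\<in>Ecar X E A.
           cmp X dm f' = cmp X h' g \<and> cmp X e h' = g' \<and>
           (C, cmp X g f, h') \<in> rlz X E A d'' \<and>
           (E, dm, e) \<in> rlz X F D (epush X F B D f' d') \<and>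
           epull X D E A dm d'' = d \<and>
           epush X E A B f d'' = epull X E F B e d'))"

definition ET4op :: "('o,'m,'e) extri \<Rightarrow> bool" where
  "ET4op X \<longleftrightarrow>
     (\<forall>A\<in>Ob X. \<forall>B\<in>Ob X. \<forall>C\<in>Ob X. \<forall>D\<in>Ob X. \<forall>F\<in>Ob X.
      \<forall>d\<in>Ecar X B D. \<forall>d'\<in>Ecar X F C. \<forall>f f' g g'.
        (A,f,f') \<in> rlz X B D d \<longrightarrow> (B,g,g') \<in> rlz X F C d' \<longrightarrow>
        (\<exists>E\<in>Ob X. \<exists>dm\<in>Hm X D E. \<exists>e\<in>Hm X E C. \<exists>h\<in>Hm X E A. \<exists>d''\<in>Ecar X F E.
           cmp X h dm = f \<and> cmp X f' h = cmp X g e \<and>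
           (E, h, cmp X g' f') \<in> rlz X F E d'' \<and>
           (E, dm, e) \<in> rlz X C D (epull X C B D g d) \<and>
           epush X F E C e d'' = d' \<and>
           epush X B D E dm d = epull X B F E g' d''))"

definition extriangulated :: "('o,'m,'e) extri \<Rightarrow> bool" where
  "extriangulated X \<longleftrightarrow> additive_cat X \<and> biadditive_E X \<and> realisation_wf X \<and>
     is_realisation X \<and> additive_realisation X \<and> ET3 X \<and> ET3op X \<and> ET4 X \<and> ET4op X"

definition is_inflation :: "('o,'m,'e) extri \<Rightarrow> 'o \<Rightarrow> 'o \<Rightarrow> 'm \<Rightarrow> bool" where
  "is_inflation X A B x \<longleftrightarrow> x \<in> Hm X A B \<and>
     (\<exists>C\<in>Ob X. \<exists>d\<in>Ecar X C A. \<exists>y. (B,x,y) \<in> rlz X C A d)"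

definition is_deflation :: "('o,'m,'e) extri \<Rightarrow> 'o \<Rightarrow> 'o \<Rightarrow> 'm \<Rightarrow> bool" where
  "is_deflation X B C y \<longleftrightarrow> y \<in> Hm X B C \<and>
     (\<exists>A\<in>Ob X. \<exists>d\<in>Ecar X C A. \<exists>x. (B,x,y) \<in> rlz X C A d)"

end

theory Submission
  imports Defs "HOL-Algebra.Coset"
begin

text \<open>
  The map \<open>\<epsilon> \<mapsto> \<epsilon>\<^sup>*\<delta>\<^sub>Y\<close> is additive because \<open>\<E>\<close> is biadditive.
  It has trivial kernel by exactness of \<open>\<C>(-,Z) \<rightarrow> \<C>(-,\<Sigma>Y) \<rightarrow> \<E>(-,Y)\<close>: if
  \<open>\<epsilon>\<^sup>*\<delta>\<^sub>Y = 0\<close>, then (ET2) applied to the split sequence realising \<open>0\<close> makes \<open>\<epsilon>\<close>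
  factor through the deflation \<open>Z \<rightarrow> \<Sigma>Y\<close>, so \<open>\<epsilon> = 0\<close>. It is surjective by
  (ET3): a realisation \<open>Y \<rightarrow> B \<rightarrow> X\<close> of \<open>\<delta>\<close> maps to \<open>Y \<rightarrow> Z \<rightarrow> \<Sigma>Y\<close> via
  \<open>(1\<^sub>Y, 0)\<close>, and the induced \<open>\<epsilon> : X \<rightarrow> \<Sigma>Y\<close> satisfies \<open>\<delta> = \<epsilon>\<^sup>*\<delta>\<^sub>Y\<close>.
\<close>

locale additive_category =
  fixes X :: "('o,'m,'e) extri"
  assumes additive: "additive_cat X"
begin

lemma group_Hg: "A \<in> Ob X \<Longrightarrow> B \<in> Ob X \<Longrightarrow> group (Hg X A B)"
  using additive unfolding additive_cat_def by (auto intro: comm_group.axioms(2))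

lemma zmor_closed: "A \<in> Ob X \<Longrightarrow> B \<in> Ob X \<Longrightarrow> zmor X A B \<in> Hm X A B"
  using group_Hg unfolding zmor_def Hm_def by (simp add: group.is_monoid monoid.one_closed)

lemma idm_closed: "A \<in> Ob X \<Longrightarrow> idm X A \<in> Hm X A A"
  using additive unfolding additive_cat_def by auto

lemma cmp_closed:
  "\<lbrakk>A \<in> Ob X; B \<in> Ob X; C \<in> Ob X; f \<in> Hm X A B; g \<in> Hm X B C\<rbrakk> \<Longrightarrow> cmp X g f \<in> Hm X A C"
  using additive unfolding additive_cat_def by auto

lemma cmp_assoc:
  "\<lbrakk>A \<in> Ob X; B \<in> Ob X; C \<in> Ob X; D \<in> Ob X; f \<in> Hm X A B; g \<in> Hm X B C; h \<in> Hm X C D\<rbrakk>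
    \<Longrightarrow> cmp X h (cmp X g f) = cmp X (cmp X h g) f"
  using additive unfolding additive_cat_def by auto

lemma cmp_idm_right: "\<lbrakk>A \<in> Ob X; B \<in> Ob X; f \<in> Hm X A B\<rbrakk> \<Longrightarrow> cmp X f (idm X A) = f"
  using additive unfolding additive_cat_def by auto

lemma cmp_hadd_left:
  "\<lbrakk>A \<in> Ob X; B \<in> Ob X; C \<in> Ob X; f \<in> Hm X A B; g \<in> Hm X B C; g' \<in> Hm X B C\<rbrakk>
    \<Longrightarrow> cmp X (hadd X B C g g') f = hadd X A C (cmp X g f) (cmp X g' f)"
  using additive unfolding additive_cat_def by auto

lemma cmp_zmor_left:
  assumes "A \<in> Ob X" "B \<in> Ob X" "C \<in> Ob X" "f \<in> Hm X A B"
  shows "cmp X (zmor X B C) f = zmor X A C"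
proof -
  let ?z = "cmp X (zmor X B C) f"
  have "hadd X B C (zmor X B C) (zmor X B C) = zmor X B C"
    using group_Hg[OF assms(2,3)] unfolding hadd_def zmor_def by (simp add: group.is_monoid)
  then have "?z = ?z \<otimes>\<^bsub>Hg X A C\<^esub> ?z"
    using cmp_hadd_left[OF assms zmor_closed zmor_closed] assms unfolding hadd_def by simp
  moreover have "?z \<in> carrier (Hg X A C)"
    using cmp_closed[OF assms zmor_closed] assms unfolding Hm_def by simp
  ultimately show ?thesis
    using group.l_cancel_one'[OF group_Hg[OF assms(1,3)]] unfolding zmor_def by blast
qed

lemma biprod_exists: "A \<in> Ob X \<Longrightarrow> B \<in> Ob X \<Longrightarrow> \<exists>P i1 i2 p1 p2. is_biprod X A B P i1 i2 p1 p2"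
  using additive unfolding additive_cat_def by auto

end

locale extriangulated_category =
  fixes X :: "('o,'m,'e) extri"
  assumes extriangulated: "extriangulated X"

sublocale extriangulated_category \<subseteq> additive_category
  using extriangulated unfolding extriangulated_def by unfold_locales simp

context extriangulated_category
begin

lemma E_biadditive: "biadditive_E X"
  and rlz_wf: "realisation_wf X"
  and rlz_realisation: "is_realisation X"
  and rlz_additive: "additive_realisation X"
  and rlz_ET3: "ET3 X"
  using extriangulated unfolding extriangulated_def by simp_all

lemma group_Eg: "C \<in> Ob X \<Longrightarrow> A \<in> Ob X \<Longrightarrow> group (Eg X C A)"
  using E_biadditive unfolding biadditive_E_def by (auto intro: comm_group.axioms(2))

lemma epull_hom:
  "\<lbrakk>C' \<in> Ob X; C \<in> Ob X; A \<in> Ob X; c \<in> Hm X C' C\<rbrakk>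
    \<Longrightarrow> epull X C' C A c \<in> hom (Eg X C A) (Eg X C' A)"
  using E_biadditive unfolding biadditive_E_def by auto

lemma epull_hadd:
  "\<lbrakk>C' \<in> Ob X; C \<in> Ob X; A \<in> Ob X; c \<in> Hm X C' C; c' \<in> Hm X C' C; d \<in> Ecar X C A\<rbrakk>
    \<Longrightarrow> epull X C' C A (hadd X C' C c c') d = epull X C' C A c d \<otimes>\<^bsub>Eg X C' A\<^esub> epull X C' C A c' d"
  using E_biadditive unfolding biadditive_E_def by auto

lemma epush_idm: "\<lbrakk>C \<in> Ob X; A \<in> Ob X; d \<in> Ecar X C A\<rbrakk> \<Longrightarrow> epush X C A A (idm X A) d = d"
  using E_biadditive unfolding biadditive_E_def by auto

lemma realisation_exists:
  assumes "C \<in> Ob X" "A \<in> Ob X" "d \<in> Ecar X C A"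
  obtains B x y where "(B, x, y) \<in> rlz X C A d" "B \<in> Ob X" "x \<in> Hm X A B" "y \<in> Hm X B C"
proof -
  have "rlz X C A d \<noteq> {} \<and> (\<forall>(B, x, y)\<in>rlz X C A d. B \<in> Ob X \<and> x \<in> Hm X A B \<and> y \<in> Hm X B C)"
    using rlz_wf[unfolded realisation_wf_def, rule_format, OF assms] by (elim conjE) (intro conjI)
  then show ?thesis
    using that by fast
qed

lemma realisation_Hm:
  "\<lbrakk>C \<in> Ob X; A \<in> Ob X; d \<in> Ecar X C A; (B, x, y) \<in> rlz X C A d\<rbrakk>
    \<Longrightarrow> B \<in> Ob X \<and> x \<in> Hm X A B \<and> y \<in> Hm X B C"
  using rlz_wf unfolding realisation_wf_def by fast

lemma split_realises_one:
  "\<lbrakk>A \<in> Ob X; C \<in> Ob X; is_biprod X A C P iA iC pA pC\<rbrakk> \<Longrightarrow> (P, iA, pC) \<in> rlz X C A \<one>\<^bsub>Eg X C A\<^esub>"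
  using rlz_additive unfolding additive_realisation_def by auto

lemma morphism_of_realisations_from_epull:
  assumes "A \<in> Ob X" "C \<in> Ob X" "C' \<in> Ob X" "d \<in> Ecar X C A" "d' \<in> Ecar X C' A"
    and "c \<in> Hm X C C'" "d = epull X C C' A c d'"
    and "(B, x, y) \<in> rlz X C A d" "(B', x', y') \<in> rlz X C' A d'"
  shows "\<exists>b\<in>Hm X B B'. cmp X b x = x' \<and> cmp X y' b = cmp X c y"
proof -
  have "epush X C A A (idm X A) d = epull X C C' A c d'"
    using epush_idm assms by simp
  then have "\<exists>b\<in>Hm X B B'. cmp X b x = cmp X x' (idm X A) \<and> cmp X y' b = cmp X c y"
    using rlz_realisation[unfolded is_realisation_def, rule_format,
        OF assms(1,2,1,3,4,5) idm_closed[OF assms(1)] assms(6)] assms(8,9) by blast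
  moreover have "cmp X x' (idm X A) = x'"
    using realisation_Hm[OF assms(3,1,5,9)] cmp_idm_right[OF assms(1)] by blast
  ultimately show ?thesis
    by simp
qed

lemma epull_from_morphism_of_realisations:
  assumes "A \<in> Ob X" "C \<in> Ob X" "C' \<in> Ob X" "d \<in> Ecar X C A" "d' \<in> Ecar X C' A"
    and "(B, x, y) \<in> rlz X C A d" "(B', x', y') \<in> rlz X C' A d'"
    and "b \<in> Hm X B B'" "cmp X b x = x'"
  shows "\<exists>c\<in>Hm X C C'. cmp X c y = cmp X y' b \<and> d = epull X C C' A c d'"
proof -
  have "cmp X b x = cmp X x' (idm X A)"
    using realisation_Hm[OF assms(3,1,5,7)] cmp_idm_right[OF assms(1)] assms(9) by metis
  then have "\<exists>c\<in>Hm X C C'. cmp X c y = cmp X y' b \<and> epush X C A A (idm X A) d = epull X C C' A c d'"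
    using rlz_ET3[unfolded ET3_def, rule_format,
        OF assms(1,2,1,3,4,5) assms(6,7) idm_closed[OF assms(1)] assms(8)] by blast
  then show ?thesis
    using epush_idm assms by simp
qed

lemma epull_eq_one_imp_factors_through:
  assumes "W \<in> Ob X" "A \<in> Ob X" "C \<in> Ob X" "d \<in> Ecar X C A" "(B, x, y) \<in> rlz X C A d"
    and "c \<in> Hm X W C" "epull X W C A c d = \<one>\<^bsub>Eg X W A\<^esub>"
  shows "\<exists>b\<in>Hm X W B. c = cmp X y b"
proof -
  obtain P iA iW pA pW where P: "is_biprod X A W P iA iW pA pW"
    using biprod_exists assms by blast
  have P_ob: "P \<in> Ob X" and iW: "iW \<in> Hm X W P" and pW: "pW \<in> Hm X P W"
    and pW_iW: "cmp X pW iW = idm X W"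
    using P unfolding is_biprod_def by auto
  have B: "B \<in> Ob X" and y: "y \<in> Hm X B C"
    using realisation_Hm assms by blast+
  have one: "\<one>\<^bsub>Eg X W A\<^esub> \<in> Ecar X W A"
    using group_Eg assms unfolding Ecar_def by (simp add: group.is_monoid)
  obtain b where b: "b \<in> Hm X P B" and yb: "cmp X y b = cmp X c pW"
    using morphism_of_realisations_from_epull[OF assms(2,1,3) one assms(4,6) assms(7)[symmetric]
        split_realises_one[OF assms(2,1) P] assms(5)] by blast
  have "c = cmp X c (cmp X pW iW)"
    using pW_iW cmp_idm_right assms by simp
  also have "\<dots> = cmp X (cmp X y b) iW"
    using cmp_assoc[OF assms(1) P_ob assms(1) assms(3) iW pW assms(6)] yb by simp
  also have "\<dots> = cmp X y (cmp X b iW)"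
    using cmp_assoc[OF assms(1) P_ob B assms(3) iW b y] by simp
  finally show ?thesis
    using cmp_closed[OF assms(1) P_ob B iW b] by blast
qed

lemma epull_hom_Hg:
  assumes "W \<in> Ob X" "C \<in> Ob X" "A \<in> Ob X" "d \<in> Ecar X C A"
  shows "(\<lambda>c. epull X W C A c d) \<in> hom (Hg X W C) (Eg X W A)"
proof (rule homI)
  fix c assume "c \<in> carrier (Hg X W C)"
  then show "epull X W C A c d \<in> carrier (Eg X W A)"
    using epull_hom[OF assms(1-3)] assms(4) unfolding Hm_def Ecar_def hom_def by blast
next
  fix c c' assume "c \<in> carrier (Hg X W C)" "c' \<in> carrier (Hg X W C)"
  then show "epull X W C A (c \<otimes>\<^bsub>Hg X W C\<^esub> c') d
      = epull X W C A c d \<otimes>\<^bsub>Eg X W A\<^esub> epull X W C A c' d"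
    using epull_hadd assms unfolding Hm_def hadd_def by blast
qed

lemma epull_through_zero_eq_one_imp_zmor:
  assumes "is_zero_obj X Z" "W \<in> Ob X" "A \<in> Ob X" "C' \<in> Ob X" "d' \<in> Ecar X C' A"
    and "(Z, x', y') \<in> rlz X C' A d'" "c \<in> Hm X W C'" "epull X W C' A c d' = \<one>\<^bsub>Eg X W A\<^esub>"
  shows "c = zmor X W C'"
proof -
  have Z: "Z \<in> Ob X"
    using assms(1) unfolding is_zero_obj_def by blast
  have y': "y' \<in> Hm X Z C'"
    using realisation_Hm assms by blast
  obtain b where b: "b \<in> Hm X W Z" and c: "c = cmp X y' b"
    using epull_eq_one_imp_factors_through[OF assms(2-4,5,6,7,8)] by blast
  have "y' = zmor X Z C'"
    using assms(1) y' zmor_closed Z assms(4) unfolding is_zero_obj_def by blast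
  then show ?thesis
    using c cmp_zmor_left[OF assms(2) Z assms(4) b] by simp
qed

lemma epull_through_zero_surj:
  assumes "is_zero_obj X Z" "A \<in> Ob X" "C \<in> Ob X" "C' \<in> Ob X" "d' \<in> Ecar X C' A"
    and "(Z, x', y') \<in> rlz X C' A d'" "d \<in> Ecar X C A"
  shows "\<exists>c\<in>Hm X C C'. d = epull X C C' A c d'"
proof -
  have Z: "Z \<in> Ob X"
    using assms(1) unfolding is_zero_obj_def by blast
  obtain B x y where r: "(B, x, y) \<in> rlz X C A d" and B: "B \<in> Ob X" and x: "x \<in> Hm X A B"
    using realisation_exists[OF assms(3,2,7)] by blast
  have "cmp X (zmor X B Z) x \<in> Hm X A Z" "x' \<in> Hm X A Z"
    using cmp_closed[OF assms(2) B Z x zmor_closed[OF B Z]] realisation_Hm assms by blast+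
  then have "cmp X (zmor X B Z) x = x'"
    using assms(1,2) unfolding is_zero_obj_def by blast
  then show ?thesis
    using epull_from_morphism_of_realisations[OF assms(2-4,7,5) r assms(6) zmor_closed[OF B Z]] by blast
qed

end

theorem lemma3p8:
  fixes X :: "('o,'m,'e) extri" and Z :: 'o and Sig :: "'o \<Rightarrow> 'o" and dl :: "'o \<Rightarrow> 'e"
    and Xo Y :: 'o
  assumes "extriangulated X"
    and "is_zero_obj X Z"
    and "\<forall>A\<in>Ob X. is_inflation X A Z (zmor X A Z)"
    and "\<forall>A\<in>Ob X. is_deflation X Z A (zmor X Z A)"
    and "\<forall>W\<in>Ob X. Sig W \<in> Ob X \<and> dl W \<in> Ecar X (Sig W) W \<and>
           (Z, zmor X W Z, zmor X Z (Sig W)) \<in> rlz X (Sig W) W (dl W)"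
    and "Xo \<in> Ob X" and "Y \<in> Ob X"
  shows "(\<lambda>\<epsilon>. epull X Xo (Sig Y) Y \<epsilon> (dl Y)) \<in> iso (Hg X Xo (Sig Y)) (Eg X Xo Y)"
proof -
  \<comment> \<open>Hypotheses 3 and 4 only guarantee that \<open>\<Sigma>\<close> and \<open>\<delta>\<close> exist.\<close>
  interpret extriangulated_category X
    using assms(1) by unfold_locales
  have SY: "Sig Y \<in> Ob X" and dl: "dl Y \<in> Ecar X (Sig Y) Y"
    and rlz_dl: "(Z, zmor X Y Z, zmor X Z (Sig Y)) \<in> rlz X (Sig Y) Y (dl Y)"
    using assms(5,7) by auto
  let ?G = "Hg X Xo (Sig Y)" and ?H = "Eg X Xo Y" and ?h = "\<lambda>\<epsilon>. epull X Xo (Sig Y) Y \<epsilon> (dl Y)"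
  have hom: "?h \<in> hom ?G ?H"
    using epull_hom_Hg[OF assms(6) SY assms(7) dl] .
  have "kernel ?G ?H ?h = {\<one>\<^bsub>?G\<^esub>}"
  proof
    show "kernel ?G ?H ?h \<subseteq> {\<one>\<^bsub>?G\<^esub>}"
      using epull_through_zero_eq_one_imp_zmor[OF assms(2,6,7) SY dl rlz_dl]
      unfolding kernel_def Hm_def zmor_def by blast
    have "\<one>\<^bsub>?G\<^esub> \<in> carrier ?G" "?h \<one>\<^bsub>?G\<^esub> = \<one>\<^bsub>?H\<^esub>"
      using zmor_closed[OF assms(6) SY] hom_one[OF hom group_Hg[OF assms(6) SY] group_Eg[OF assms(6,7)]]
      unfolding Hm_def zmor_def by simp_all
    then show "{\<one>\<^bsub>?G\<^esub>} \<subseteq> kernel ?G ?H ?h"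
      unfolding kernel_def by simp
  qed
  moreover have "?h ` carrier ?G = carrier ?H"
  proof
    show "?h ` carrier ?G \<subseteq> carrier ?H"
      using hom unfolding hom_def by auto
    show "carrier ?H \<subseteq> ?h ` carrier ?G"
      using epull_through_zero_surj[OF assms(2,7,6) SY dl rlz_dl] unfolding Hm_def Ecar_def by blast
  qed
  ultimately show ?thesis
    using hom iso_kernel_image[OF group_Hg[OF assms(6) SY] group_Eg[OF assms(6,7)]] by blast
qed

end
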